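(* Let $G$ be the loopless clique on $V=\{1,\dots,K\}$. For any sequence of loss functions $\ell_1,\dots,\ell_T$ with $\ell_t:V\to[0,1]$, the expected regret of the algorithm Exp3.G run with feedback graph $G$, exploration set $U=V$, and parameters $\eta=\sqrt{(\ln K)/(2T)}$ and $\gamma=2\eta$ is at most $5\sqrt{T\ln K}$.
   Context: The loopless clique on $V$ is the directed graph with edge set $\{(i,j):i,j\in V,\ i\ne j\}$ (no self-loops). For a directed graph $G=(V,E)$, $N^{\mathrm{in}}(i)=\{j:(j,i)\in E\}$, $N^{\mathrm{out}}(i)=\{j:(i,j)\in E\}$. Online learning with feedback graph $G$: the environment fixes in advance losses $\ell_t:V\to[0,1]$; on round $t$ the player draws $I_t$, incurs $\ell_t(I_t)$, and observes only $\{(j,\ell_t(j)):j\in N^{\mathrm{out}}(I_t)\}$. Expected regret: $\mathbb{E}[\sum_{t=1}^T\ell_t(I_t)]-\min_{i\in V}\sum_{t=1}^T\ell_t(i)$. Algorithm Exp3.G with parameters $G$, learning rate $\eta>0$, exploration set $U\subseteq V$, exploration rate $\gamma\in[0,1]$: let $u$ be uniform on $U$ and $q_1$ uniform on $V$. For $t=1,2,\dots$: $p_t=(1-\gamma)q_t+\gamma u$; draw $I_t\sim p_t$, play it and observe $\{(i,\ell_t(i)):i\in N^{\mathrm{out}}(I_t)\}$; set $\hat\ell_t(i)=\frac{\ell_t(i)}{P_t(i)}\mathbb{1}\{i\in N^{\mathrm{out}}(I_t)\}$ with $P_t(i)=\sum_{j\in N^{\mathrm{in}}(i)}p_t(j)$,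 and $q_{t+1}(i)=\frac{q_t(i)\exp(-\eta\hat\ell_t(i))}{\sum_{j}q_t(j)\exp(-\eta\hat\ell_t(j))}$. *)

theory Defs
  imports Complex_Main
begin

text \<open>Losses are given as l :: nat \<Rightarrow> nat \<Rightarrow> real, with l t i the loss of action i in round t
  (rounds are numbered 1, 2, ...).  A history is the list of actions played so far,
  most recent action first.\<close>

definition loopless_clique :: "nat set \<Rightarrow> (nat \<times> nat) set" where
  "loopless_clique V = {(i, j). i \<in> V \<and> j \<in> V \<and> i \<noteq> j}"

definition out_nbrs :: "(nat \<times> nat) set \<Rightarrow> nat \<Rightarrow> nat set" where
  "out_nbrs E i = {j. (i, j) \<in> E}"

definition in_nbrs :: "(nat \<times> nat) set \<Rightarrow> nat \<Rightarrow> nat set" where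
  "in_nbrs E i = {j. (j, i) \<in> E}"

definition exp3g_p :: "nat set \<Rightarrow> real \<Rightarrow> (nat \<Rightarrow> real) \<Rightarrow> nat \<Rightarrow> real" where
  "exp3g_p U \<gamma> q i = (1 - \<gamma>) * q i + \<gamma> * (if i \<in> U then 1 / real (card U) else 0)"

definition exp3g_P :: "(nat \<times> nat) set \<Rightarrow> nat set \<Rightarrow> (nat \<Rightarrow> real) \<Rightarrow> nat \<Rightarrow> real" where
  "exp3g_P E V p i = (\<Sum>j\<in>V \<inter> in_nbrs E i. p j)"

definition exp3g_lhat ::
  "(nat \<times> nat) set \<Rightarrow> nat set \<Rightarrow> (nat \<Rightarrow> nat \<Rightarrow> real) \<Rightarrow> nat \<Rightarrow> (nat \<Rightarrow> real) \<Rightarrow> nat \<Rightarrow> nat \<Rightarrow> real" where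
  "exp3g_lhat E V l t p a i =
     (if i \<in> out_nbrs E a then l t i / exp3g_P E V p i else 0)"

text \<open>Exponential-weights distribution q_{t} after history h (length h = t - 1).\<close>
fun exp3g_q ::
  "(nat \<times> nat) set \<Rightarrow> nat set \<Rightarrow> nat set \<Rightarrow> real \<Rightarrow> real \<Rightarrow> (nat \<Rightarrow> nat \<Rightarrow> real)
     \<Rightarrow> nat list \<Rightarrow> nat \<Rightarrow> real" where
  "exp3g_q E V U \<eta> \<gamma> l [] i = (if i \<in> V then 1 / real (card V) else 0)"
| "exp3g_q E V U \<eta> \<gamma> l (a # h) i =
     (let q = exp3g_q E V U \<eta> \<gamma> l h;
          p = exp3g_p U \<gamma> q;
          lh = exp3g_lhat E V l (length h + 1) p a
      in q i * exp (- \<eta> * lh i) / (\<Sum>j\<in>V. q j * exp (- \<eta> * lh j)))"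

definition exp3g_pt ::
  "(nat \<times> nat) set \<Rightarrow> nat set \<Rightarrow> nat set \<Rightarrow> real \<Rightarrow> real \<Rightarrow> (nat \<Rightarrow> nat \<Rightarrow> real)
     \<Rightarrow> nat list \<Rightarrow> nat \<Rightarrow> real" where
  "exp3g_pt E V U \<eta> \<gamma> l h = exp3g_p U \<gamma> (exp3g_q E V U \<eta> \<gamma> l h)"

text \<open>Expected loss incurred in the next n rounds, given history h
  (exact expectation over the algorithm's internal randomisation).\<close>
fun exp3g_exp_loss ::
  "(nat \<times> nat) set \<Rightarrow> nat set \<Rightarrow> nat set \<Rightarrow> real \<Rightarrow> real \<Rightarrow> (nat \<Rightarrow> nat \<Rightarrow> real)
     \<Rightarrow> nat \<Rightarrow> nat list \<Rightarrow> real" where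
  "exp3g_exp_loss E V U \<eta> \<gamma> l 0 h = 0"
| "exp3g_exp_loss E V U \<eta> \<gamma> l (Suc n) h =
     (\<Sum>a\<in>V. exp3g_pt E V U \<eta> \<gamma> l h a *
              (l (length h + 1) a + exp3g_exp_loss E V U \<eta> \<gamma> l n (a # h)))"

definition exp3g_regret ::
  "(nat \<times> nat) set \<Rightarrow> nat set \<Rightarrow> nat set \<Rightarrow> real \<Rightarrow> real \<Rightarrow> (nat \<Rightarrow> nat \<Rightarrow> real)
     \<Rightarrow> nat \<Rightarrow> real" where
  "exp3g_regret E V U \<eta> \<gamma> l T =
     exp3g_exp_loss E V U \<eta> \<gamma> l T [] - (MIN i\<in>V. \<Sum>t=1..T. l t i)"

end

theory Submission
  imports Defs
begin

text \<open>
  The usual potential analysis of exponential weights, with one twist forced by the missing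
  self-loops: action j is observed only when another action is played, so P_t(j) = 1 - p_t(j).
  This is at least eta for every j, and at least 1/2 whenever q_t(j) <= 1/2, which holds for all
  actions except one of largest weight, say i. Shifting all loss estimates by that of i before the
  second-order expansion of the log-partition function (possible since eta times an estimate is at
  most 1) leaves a second-order term carrying only the weights q_t(j), j <> i. Its expectation is
  at most (1 - q_t(i)) (1 + 1 / P_t(i)) <= 3, exploration costs gamma = 2 eta, and the regret is at
  most 5 eta T + ln K / eta = (7 / sqrt 2) sqrt (T ln K).
\<close>

lemma exp_neg_le_quadratic:
  fixes x :: real assumes "0 \<le> x" shows "exp (- x) \<le> 1 - x + x\<^sup>2 / 2"
proof -
  let ?f = "\<lambda>x::real. 1 - x + x\<^sup>2 / 2 - exp (- x)"
  have "(?f has_real_derivative (y - 1 + exp (- y))) (at y)" for y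
    by (auto intro!: derivative_eq_intros simp: power2_eq_square)
  moreover have "0 \<le> y - 1 + exp (- y)" for y :: real
    using exp_ge_add_one_self[of "- y"] by simp
  ultimately have "?f 0 \<le> ?f x"
    by (intro DERIV_nonneg_imp_nondecreasing[OF assms]) blast
  then show ?thesis by simp
qed

lemma exp_neg_shifted_le:
  fixes \<eta> c L :: real
  assumes "0 \<le> c" "0 \<le> L" "0 < \<eta>" "\<eta> * c \<le> 1"
  shows "exp (- (\<eta> * (L - c))) \<le> 1 - \<eta> * (L - c) + \<eta>\<^sup>2 * (L\<^sup>2 / 2 + c\<^sup>2)"
proof (cases "c \<le> L")
  case True
  have "(\<eta> * (L - c))\<^sup>2 \<le> (\<eta> * L)\<^sup>2"
    using True assms by (intro power_mono) (auto simp: algebra_simps)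
  then have "(\<eta> * (L - c))\<^sup>2 / 2 \<le> \<eta>\<^sup>2 * (L\<^sup>2 / 2 + c\<^sup>2)"
    by (simp add: algebra_simps add_increasing2)
  then show ?thesis
    using exp_neg_le_quadratic[of "\<eta> * (L - c)"] True assms by simp
next
  case False
  let ?y = "\<eta> * (c - L)"
  have "0 \<le> ?y" "?y \<le> \<eta> * c" using False assms by (auto simp: algebra_simps)
  then have "?y\<^sup>2 \<le> (\<eta> * c)\<^sup>2" by (intro power_mono)
  then have "?y\<^sup>2 \<le> \<eta>\<^sup>2 * (L\<^sup>2 / 2 + c\<^sup>2)"
    by (simp add: algebra_simps add_increasing2)
  moreover have "exp ?y \<le> 1 + ?y + ?y\<^sup>2"
    using exp_bound \<open>0 \<le> ?y\<close> \<open>?y \<le> \<eta> * c\<close> assms(4) by simp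
  ultimately show ?thesis by (simp add: algebra_simps)
qed

lemma sum_exp_neg_shifted_le:
  fixes V :: "'a set" and q L :: "'a \<Rightarrow> real"
  assumes "finite V" "i \<in> V" "\<forall>j\<in>V. 0 \<le> q j" "sum q V = 1"
    and "\<forall>j\<in>V. 0 \<le> L j" "0 < \<eta>" "\<eta> * L i \<le> 1"
  shows "(\<Sum>j\<in>V. q j * exp (- (\<eta> * (L j - L i))))
           \<le> 1 - \<eta> * (\<Sum>j\<in>V. q j * L j) + \<eta> * L i
              + \<eta>\<^sup>2 * (\<Sum>j\<in>V-{i}. q j * ((L j)\<^sup>2 / 2 + (L i)\<^sup>2))"
proof -
  let ?R = "\<lambda>j. \<eta>\<^sup>2 * (q j * ((L j)\<^sup>2 / 2 + (L i)\<^sup>2))"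
  have "(\<Sum>j\<in>V. q j * exp (- (\<eta> * (L j - L i))))
      = q i + (\<Sum>j\<in>V-{i}. q j * exp (- (\<eta> * (L j - L i))))"
    using assms(1,2) by (simp add: sum.remove)
  also have "\<dots> \<le> q i + (\<Sum>j\<in>V-{i}. q j * (1 - \<eta> * (L j - L i)) + ?R j)"
  proof (intro add_left_mono sum_mono)
    fix j assume "j \<in> V - {i}"
    then have "exp (- (\<eta> * (L j - L i))) \<le> 1 - \<eta> * (L j - L i) + \<eta>\<^sup>2 * ((L j)\<^sup>2 / 2 + (L i)\<^sup>2)"
      using assms by (intro exp_neg_shifted_le) auto
    from mult_left_mono[OF this, of "q j"]
    show "q j * exp (- (\<eta> * (L j - L i))) \<le> q j * (1 - \<eta> * (L j - L i)) + ?R j"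
      using \<open>j \<in> V - {i}\<close> assms(3) by (simp add: algebra_simps)
  qed
  also have "\<dots> = (\<Sum>j\<in>V. q j * (1 - \<eta> * (L j - L i))) + (\<Sum>j\<in>V-{i}. ?R j)"
    using assms(1,2) by (simp add: sum.remove sum.distrib)
  also have "(\<Sum>j\<in>V. q j * (1 - \<eta> * (L j - L i))) = 1 - \<eta> * (\<Sum>j\<in>V. q j * L j) + \<eta> * L i"
  proof -
    have "(\<Sum>j\<in>V. q j * (1 - \<eta> * (L j - L i)))
        = sum q V - \<eta> * (\<Sum>j\<in>V. q j * L j) + \<eta> * L i * sum q V"
      by (simp add: algebra_simps sum.distrib sum_subtractf sum_distrib_left)
    then show ?thesis using assms(4) by simp
  qed
  finally show ?thesis by (simp add: sum_distrib_left)
qed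

lemma ln_sum_exp_neg_le:
  fixes V :: "'a set" and q L :: "'a \<Rightarrow> real"
  assumes "finite V" "i \<in> V" "\<forall>j\<in>V. 0 < q j" "sum q V = 1"
    and "\<forall>j\<in>V. 0 \<le> L j" "0 < \<eta>" "\<eta> * L i \<le> 1"
  shows "ln (\<Sum>j\<in>V. q j * exp (- \<eta> * L j))
           \<le> - \<eta> * (\<Sum>j\<in>V. q j * L j) + \<eta>\<^sup>2 * (\<Sum>j\<in>V-{i}. q j * ((L j)\<^sup>2 / 2 + (L i)\<^sup>2))"
proof -
  define S where "S = (\<Sum>j\<in>V. q j * exp (- (\<eta> * (L j - L i))))"
  have "S > 0"
    unfolding S_def using assms(1-3) by (intro sum_pos) auto
  have "(\<Sum>j\<in>V. q j * exp (- \<eta> * L j)) = exp (- \<eta> * L i) * S"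
    unfolding S_def sum_distrib_left
    by (intro sum.cong) (simp_all add: algebra_simps flip: exp_add)
  then have "ln (\<Sum>j\<in>V. q j * exp (- \<eta> * L j)) = - \<eta> * L i + ln S"
    using \<open>S > 0\<close> by (simp add: ln_mult)
  also have "\<dots> \<le> - \<eta> * L i + (S - 1)"
    using ln_le_minus_one[OF \<open>S > 0\<close>] by simp
  finally show ?thesis
    using sum_exp_neg_shifted_le[OF assms(1,2) _ assms(4-7)] assms(3) unfolding S_def
    by (simp add: less_imp_le)
qed

lemma tuned_rate_le:
  fixes L T :: real
  assumes "0 < L" "0 < T"
  shows "5 * T * sqrt (L / (2 * T)) + L / sqrt (L / (2 * T)) \<le> 5 * sqrt (T * L)"
proof -
  have sqrt_sq_mult: "sqrt (a\<^sup>2 * x) = a * sqrt x" if "0 \<le> a" for a x :: real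
    using that by (simp only: real_sqrt_mult real_sqrt_abs abs_of_nonneg)
  have "T * sqrt (L / (2 * T)) = sqrt (T\<^sup>2 * (L / (2 * T)))"
    using assms by (simp only: sqrt_sq_mult less_imp_le)
  also have "T\<^sup>2 * (L / (2 * T)) = T * L / 2"
    using assms by (simp add: field_simps power2_eq_square)
  finally have T_eta: "T * sqrt (L / (2 * T)) = sqrt (T * L / 2)" .
  have "L / sqrt (L / (2 * T)) = sqrt (L\<^sup>2 / (L / (2 * T)))"
    using assms by (simp only: real_sqrt_divide real_sqrt_abs abs_of_pos)
  also have "L\<^sup>2 / (L / (2 * T)) = 2\<^sup>2 * (T * L / 2)"
    using assms by (simp add: field_simps power2_eq_square)
  finally have L_div_eta: "L / sqrt (L / (2 * T)) = 2 * sqrt (T * L / 2)"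
    by (simp only: sqrt_sq_mult)
  have "7 * sqrt (T * L / 2) = sqrt (7\<^sup>2 * (T * L / 2))"
    by (simp only: sqrt_sq_mult)
  also have "\<dots> \<le> sqrt (5\<^sup>2 * (T * L))"
    using assms by (intro real_sqrt_le_mono) simp
  also have "\<dots> = 5 * sqrt (T * L)"
    by (simp only: sqrt_sq_mult)
  finally show ?thesis using T_eta L_div_eta by simp
qed

locale exp3g_on_loopless_clique =
  fixes V :: "nat set" and T :: nat and l :: "nat \<Rightarrow> nat \<Rightarrow> real" and \<eta> \<gamma> :: real
  assumes finite_V: "finite V" and two_le_card_V: "2 \<le> card V"
    and losses_bounded: "\<forall>t\<in>{1..T}. \<forall>i\<in>V. 0 \<le> l t i \<and> l t i \<le> 1"
    and eta_pos: "0 < \<eta>" and gamma_eq: "\<gamma> = 2 * \<eta>" and gamma_le_1: "\<gamma> \<le> 1"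
begin

abbreviation "E \<equiv> loopless_clique V"
abbreviation "q \<equiv> exp3g_q E V V \<eta> \<gamma> l"
abbreviation "p \<equiv> exp3g_pt E V V \<eta> \<gamma> l"
abbreviation "expected_loss \<equiv> exp3g_exp_loss E V V \<eta> \<gamma> l"

text \<open>P h and lhat h are P_t and the loss estimates of round t = length h + 1, which follows
  the history h.\<close>

definition P :: "nat list \<Rightarrow> nat \<Rightarrow> real" where
  "P h = exp3g_P E V (p h)"

definition lhat :: "nat list \<Rightarrow> nat \<Rightarrow> nat \<Rightarrow> real" where
  "lhat h = exp3g_lhat E V l (length h + 1) (p h)"

lemma V_nonempty: "V \<noteq> {}"
  using two_le_card_V by auto

lemma loss_bounds:
  assumes "length h < T" "i \<in> V"
  shows "0 \<le> l (length h + 1) i" "l (length h + 1) i \<le> 1"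
  using losses_bounded assms by auto

lemma out_nbrs_loopless_clique: "a \<in> V \<Longrightarrow> out_nbrs E a = V - {a}"
  by (auto simp: out_nbrs_def loopless_clique_def)

lemma in_nbrs_loopless_clique: "j \<in> V \<Longrightarrow> V \<inter> in_nbrs E j = V - {j}"
  by (auto simp: in_nbrs_def loopless_clique_def)

lemma q_Cons:
  "q (a # h) k = q h k * exp (- \<eta> * lhat h a k) / (\<Sum>j\<in>V. q h j * exp (- \<eta> * lhat h a j))"
  by (simp add: lhat_def exp3g_pt_def Let_def)

lemma q_pos_sum: "(\<forall>i\<in>V. 0 < q h i) \<and> sum (q h) V = 1"
proof (induction h)
  case Nil
  show ?case using two_le_card_V by simp
next
  case (Cons a h)
  define Z where "Z = (\<Sum>j\<in>V. q h j * exp (- \<eta> * lhat h a j))"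
  have "0 < Z"
    unfolding Z_def using Cons finite_V V_nonempty by (intro sum_pos) auto
  have q_Cons': "q (a # h) i = q h i * exp (- \<eta> * lhat h a i) / Z" for i
    unfolding Z_def by (rule q_Cons)
  have "sum (q (a # h)) V = (\<Sum>i\<in>V. q h i * exp (- \<eta> * lhat h a i)) / Z"
    unfolding sum_divide_distrib by (rule sum.cong) (simp_all only: q_Cons')
  also have "\<dots> = 1"
    using \<open>0 < Z\<close> unfolding Z_def by simp
  moreover have "0 < q (a # h) i" if "i \<in> V" for i
    unfolding q_Cons' using Cons that \<open>0 < Z\<close> by simp
  ultimately show ?case by simp
qed

lemma q_pos: "i \<in> V \<Longrightarrow> 0 < q h i"
  using q_pos_sum by blast

lemma q_nonneg: "i \<in> V \<Longrightarrow> 0 \<le> q h i"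
  using q_pos less_imp_le by blast

lemma q_sum: "sum (q h) V = 1"
  using q_pos_sum by blast

lemma q_le_1: "i \<in> V \<Longrightarrow> q h i \<le> 1"
  using member_le_sum[of i V "q h"] finite_V q_nonneg q_sum by auto

lemma q_sum_remove: "i \<in> V \<Longrightarrow> sum (q h) (V - {i}) = 1 - q h i"
  using finite_V q_sum by (simp add: sum_diff1)

lemma q_le_half_if_le_other:
  assumes "i \<in> V" "j \<in> V - {i}" "q h j \<le> q h i"
  shows "q h j \<le> 1 / 2"
proof -
  have "sum (q h) {i, j} \<le> sum (q h) V"
    using assms finite_V q_nonneg by (intro sum_mono2) auto
  then show ?thesis using assms q_sum by simp
qed

lemma p_eq: "i \<in> V \<Longrightarrow> p h i = (1 - \<gamma>) * q h i + \<gamma> / card V"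
  by (simp add: exp3g_pt_def exp3g_p_def)

lemma p_pos: "i \<in> V \<Longrightarrow> 0 < p h i"
proof -
  assume "i \<in> V"
  have "0 \<le> (1 - \<gamma>) * q h i" using gamma_le_1 q_nonneg[OF \<open>i \<in> V\<close>] by simp
  moreover have "0 < \<gamma> / card V" using gamma_eq eta_pos two_le_card_V by simp
  ultimately show ?thesis using p_eq[OF \<open>i \<in> V\<close>, of h] by linarith
qed

lemma p_sum: "sum (p h) V = 1"
proof -
  have "sum (p h) V = (1 - \<gamma>) * sum (q h) V + \<gamma> / card V * card V"
    by (simp add: p_eq sum.distrib sum_distrib_left)
  then show ?thesis using q_sum two_le_card_V by simp
qed

lemma P_eq_sum: "j \<in> V \<Longrightarrow> P h j = sum (p h) (V - {j})"
  by (simp add: P_def exp3g_P_def in_nbrs_loopless_clique)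

lemma P_ge: "j \<in> V \<Longrightarrow> \<eta> + (1 - \<gamma>) * (1 - q h j) \<le> P h j"
proof -
  assume "j \<in> V"
  have "\<gamma> / card V \<le> \<gamma> / 2"
    using two_le_card_V gamma_eq eta_pos by (intro divide_left_mono) auto
  moreover have "P h j = 1 - p h j"
    using \<open>j \<in> V\<close> finite_V p_sum by (simp add: P_eq_sum sum_diff1)
  moreover have "(1 - \<gamma>) * (1 - q h j) = 1 - q h j - \<gamma> * (1 - q h j)"
    "(1 - \<gamma>) * q h j = q h j - \<gamma> * q h j"
    by (simp_all add: algebra_simps)
  ultimately show ?thesis
    using p_eq[OF \<open>j \<in> V\<close>, of h] gamma_eq by (simp add: algebra_simps)
qed

lemma P_ge_eta: "j \<in> V \<Longrightarrow> \<eta> \<le> P h j"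
  using P_ge[of j h] gamma_le_1 q_le_1[of j h] by (smt (verit) mult_nonneg_nonneg)

lemma P_pos: "j \<in> V \<Longrightarrow> 0 < P h j"
  using P_ge_eta eta_pos by (meson less_le_trans)

lemma P_ge_half:
  assumes "j \<in> V" "q h j \<le> 1 / 2"
  shows "1 / 2 \<le> P h j"
proof -
  have "(1 - \<gamma>) * (1 / 2) \<le> (1 - \<gamma>) * (1 - q h j)"
    using assms gamma_le_1 by (intro mult_left_mono) auto
  moreover have "(1 - \<gamma>) * (1 / 2) = 1 / 2 - \<eta>"
    using gamma_eq by simp
  ultimately show ?thesis using P_ge[OF assms(1), of h] by linarith
qed

lemma one_minus_q_le_twice_P: "j \<in> V \<Longrightarrow> 1 - q h j \<le> 2 * P h j"
proof -
  assume "j \<in> V"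
  \<comment> \<open>\<open>2 P - (1 - q) \<ge> \<gamma> q + (1 - \<gamma>) (1 - q)\<close>\<close>
  have "0 \<le> \<gamma> * q h j + (1 - \<gamma>) * (1 - q h j)"
    using gamma_le_1 gamma_eq eta_pos q_nonneg[OF \<open>j \<in> V\<close>] q_le_1[OF \<open>j \<in> V\<close>] by simp
  then show ?thesis using P_ge[OF \<open>j \<in> V\<close>, of h] gamma_eq by (simp add: algebra_simps)
qed

lemma lhat_eq:
  "a \<in> V \<Longrightarrow> lhat h a j = (if j \<in> V - {a} then l (length h + 1) j / P h j else 0)"
  by (simp add: lhat_def exp3g_lhat_def out_nbrs_loopless_clique P_def)

lemma lhat_nonneg: "a \<in> V \<Longrightarrow> length h < T \<Longrightarrow> 0 \<le> lhat h a j"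
  using loss_bounds(1) P_pos by (auto simp: lhat_eq intro!: divide_nonneg_pos)

lemma eta_lhat_le_1:
  assumes "a \<in> V" "length h < T"
  shows "\<eta> * lhat h a j \<le> 1"
proof (cases "j \<in> V - {a}")
  case True
  let ?l = "l (length h + 1) j"
  have "\<eta> * (?l / P h j) \<le> P h j * (?l / P h j)"
    using True P_ge_eta P_pos loss_bounds[OF assms(2)]
    by (intro mult_right_mono) (auto intro: divide_nonneg_pos)
  also have "\<dots> = ?l"
    using True P_pos[of j h] by simp
  finally show ?thesis
    using True assms loss_bounds(2)[OF assms(2), of j] by (simp add: lhat_eq)
qed (use assms in \<open>auto simp: lhat_eq\<close>)

lemma expectation_lhat:
  assumes "j \<in> V" "f 0 = 0"
  shows "(\<Sum>a\<in>V. p h a * f (lhat h a j)) = P h j * f (l (length h + 1) j / P h j)"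
proof -
  have "(\<Sum>a\<in>V. p h a * f (lhat h a j)) = (\<Sum>a\<in>V - {j}. p h a * f (lhat h a j))"
    using assms finite_V by (simp add: sum.remove lhat_eq)
  also have "\<dots> = (\<Sum>a\<in>V - {j}. p h a * f (l (length h + 1) j / P h j))"
    using assms by (intro sum.cong) (auto simp: lhat_eq)
  finally show ?thesis
    using assms by (simp add: P_eq_sum sum_distrib_right)
qed

lemma lhat_unbiased: "j \<in> V \<Longrightarrow> (\<Sum>a\<in>V. p h a * lhat h a j) = l (length h + 1) j"
  using expectation_lhat[of j id h] P_pos[of j h] by simp

lemma lhat_second_moment:
  "j \<in> V \<Longrightarrow> (\<Sum>a\<in>V. p h a * (lhat h a j)\<^sup>2) = (l (length h + 1) j)\<^sup>2 / P h j"
  using expectation_lhat[of j "\<lambda>x. x\<^sup>2" h] P_pos[of j h] by (simp add: power2_eq_square)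

lemma ln_q_Cons_ge:
  assumes "a \<in> V" "length h < T" "i \<in> V" "k \<in> V"
  shows "\<eta> * (\<Sum>j\<in>V. q h j * lhat h a j) - \<eta> * lhat h a k
           - \<eta>\<^sup>2 * (\<Sum>j\<in>V-{i}. q h j * ((lhat h a j)\<^sup>2 / 2 + (lhat h a i)\<^sup>2))
         \<le> ln (q (a # h) k) - ln (q h k)"
proof -
  define Z where "Z = (\<Sum>j\<in>V. q h j * exp (- \<eta> * lhat h a j))"
  have "0 < Z"
    unfolding Z_def using finite_V V_nonempty q_pos by (intro sum_pos) auto
  have "ln (q (a # h) k) = ln (q h k) - \<eta> * lhat h a k - ln Z"
    unfolding q_Cons Z_def[symmetric] using q_pos[OF assms(4), of h] \<open>0 < Z\<close>
    by (simp add: ln_div ln_mult)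
  moreover have "ln Z \<le> - \<eta> * (\<Sum>j\<in>V. q h j * lhat h a j)
      + \<eta>\<^sup>2 * (\<Sum>j\<in>V-{i}. q h j * ((lhat h a j)\<^sup>2 / 2 + (lhat h a i)\<^sup>2))"
    unfolding Z_def using assms q_pos q_sum lhat_nonneg eta_pos eta_lhat_le_1
    by (intro ln_sum_exp_neg_le finite_V) auto
  ultimately show ?thesis by simp
qed

lemma expected_second_order_eq:
  assumes "i \<in> V"
  shows "(\<Sum>a\<in>V. p h a * (\<Sum>j\<in>V-{i}. q h j * ((lhat h a j)\<^sup>2 / 2 + (lhat h a i)\<^sup>2)))
       = (\<Sum>j\<in>V-{i}. q h j * ((l (length h + 1) j)\<^sup>2 / P h j / 2 + (l (length h + 1) i)\<^sup>2 / P h i))"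
proof -
  have "(\<Sum>a\<in>V. p h a * (\<Sum>j\<in>V-{i}. q h j * ((lhat h a j)\<^sup>2 / 2 + (lhat h a i)\<^sup>2)))
      = (\<Sum>j\<in>V-{i}. q h j * ((\<Sum>a\<in>V. p h a * (lhat h a j)\<^sup>2) / 2 + (\<Sum>a\<in>V. p h a * (lhat h a i)\<^sup>2)))"
    by (simp add: sum_distrib_left sum_divide_distrib sum.distrib algebra_simps sum.swap[of _ V])
  then show ?thesis
    using assms by (simp add: lhat_second_moment)
qed

lemma expected_second_order_le_3:
  assumes "length h < T" "i \<in> V" "\<forall>j\<in>V. q h j \<le> q h i"
  shows "(\<Sum>j\<in>V-{i}. q h j * ((l (length h + 1) j)\<^sup>2 / P h j / 2 + (l (length h + 1) i)\<^sup>2 / P h i)) \<le> 3"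
proof -
  let ?l = "l (length h + 1)"
  have "(\<Sum>j\<in>V-{i}. q h j * ((?l j)\<^sup>2 / P h j / 2 + (?l i)\<^sup>2 / P h i))
      \<le> (\<Sum>j\<in>V-{i}. q h j * (1 + 1 / P h i))"
  proof (intro sum_mono mult_left_mono add_mono)
    fix j assume "j \<in> V - {i}"
    then have "1 / 2 \<le> P h j"
      using assms by (intro P_ge_half q_le_half_if_le_other[of i]) auto
    moreover have "(?l j)\<^sup>2 \<le> 1"
      using \<open>j \<in> V - {i}\<close> loss_bounds[OF assms(1)] by (simp add: power_le_one)
    ultimately show "(?l j)\<^sup>2 / P h j / 2 \<le> 1"
      by (simp add: divide_le_eq)
    show "(?l i)\<^sup>2 / P h i \<le> 1 / P h i"
      using loss_bounds[OF assms(1,2)] P_pos[OF assms(2), of h]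
      by (intro divide_right_mono) (auto simp: power_le_one)
    show "0 \<le> q h j"
      using \<open>j \<in> V - {i}\<close> q_nonneg by simp
  qed
  also have "\<dots> = (1 - q h i) * (1 + 1 / P h i)"
    using assms(2) by (simp add: q_sum_remove flip: sum_distrib_right)
  also have "\<dots> = (1 - q h i) + (1 - q h i) / P h i"
    by (simp add: distrib_left)
  also have "\<dots> \<le> 1 + 2"
    using one_minus_q_le_twice_P[OF assms(2)] P_pos[OF assms(2)] q_nonneg[OF assms(2)]
    by (intro add_mono) (simp_all add: divide_le_eq)
  finally show ?thesis by simp
qed

lemma expected_loss_p_le_q:
  assumes "length h < T"
  shows "(\<Sum>a\<in>V. p h a * l (length h + 1) a) \<le> (\<Sum>a\<in>V. q h a * l (length h + 1) a) + \<gamma>"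
proof -
  have "(\<Sum>a\<in>V. p h a * l (length h + 1) a) \<le> (\<Sum>a\<in>V. q h a * l (length h + 1) a + \<gamma> / card V)"
  proof (intro sum_mono)
    fix a assume "a \<in> V"
    have "p h a * l (length h + 1) a
        = (1 - \<gamma>) * (q h a * l (length h + 1) a) + \<gamma> / card V * l (length h + 1) a"
      using \<open>a \<in> V\<close> by (simp add: p_eq algebra_simps)
    also have "\<dots> \<le> q h a * l (length h + 1) a + \<gamma> / card V"
      using \<open>a \<in> V\<close> assms loss_bounds q_nonneg gamma_eq eta_pos gamma_le_1
      by (intro add_mono mult_left_le_one_le mult_left_le mult_nonneg_nonneg) auto
    finally show "p h a * l (length h + 1) a \<le> q h a * l (length h + 1) a + \<gamma> / card V" .
  qed
  also have "\<dots> = (\<Sum>a\<in>V. q h a * l (length h + 1) a) + \<gamma>"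
    using two_le_card_V by (simp add: sum.distrib)
  finally show ?thesis .
qed

lemma expected_weighted_lhat:
  "(\<Sum>a\<in>V. p h a * (\<Sum>j\<in>V. w j * lhat h a j)) = (\<Sum>j\<in>V. w j * l (length h + 1) j)"
proof -
  have "(\<Sum>a\<in>V. p h a * (\<Sum>j\<in>V. w j * lhat h a j)) = (\<Sum>j\<in>V. w j * (\<Sum>a\<in>V. p h a * lhat h a j))"
    unfolding sum_distrib_left by (subst sum.swap) (simp add: mult.left_commute)
  then show ?thesis by (simp add: lhat_unbiased)
qed

lemma round_potential_le:
  assumes "length h < T" "k \<in> V"
  shows "(\<Sum>a\<in>V. p h a * (l (length h + 1) a - ln (q (a # h) k) / \<eta>))
           \<le> l (length h + 1) k + 5 * \<eta> - ln (q h k) / \<eta>"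
proof -
  let ?l = "l (length h + 1)"
  obtain i where i: "i \<in> V" "\<forall>j\<in>V. q h j \<le> q h i"
    using Max_in[of "q h ` V"] Max_ge[of "q h ` V"] finite_V V_nonempty by fastforce
  define R where "R a = (\<Sum>j\<in>V-{i}. q h j * ((lhat h a j)\<^sup>2 / 2 + (lhat h a i)\<^sup>2))" for a
  define D where "D = (\<Sum>a\<in>V. p h a * ln (q (a # h) k)) - ln (q h k)"
  define ER where "ER = (\<Sum>a\<in>V. p h a * R a)"
  define Lq where "Lq = (\<Sum>j\<in>V. q h j * ?l j)"
  have "\<eta> * Lq - \<eta> * ?l k - \<eta>\<^sup>2 * ER
      = \<eta> * (\<Sum>a\<in>V. p h a * (\<Sum>j\<in>V. q h j * lhat h a j)) - \<eta> * (\<Sum>a\<in>V. p h a * lhat h a k)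
        - \<eta>\<^sup>2 * ER"
    unfolding Lq_def by (simp only: expected_weighted_lhat lhat_unbiased[OF assms(2)])
  also have "\<dots> = (\<Sum>a\<in>V. p h a * (\<eta> * (\<Sum>j\<in>V. q h j * lhat h a j) - \<eta> * lhat h a k - \<eta>\<^sup>2 * R a))"
    unfolding ER_def by (simp add: right_diff_distrib sum_subtractf sum_distrib_left mult.left_commute)
  also have "\<dots> \<le> (\<Sum>a\<in>V. p h a * (ln (q (a # h) k) - ln (q h k)))"
    unfolding R_def using assms i(1) p_pos ln_q_Cons_ge
    by (intro sum_mono mult_left_mono) (auto simp: less_imp_le)
  also have "\<dots> = D"
    unfolding D_def using p_sum by (simp add: right_diff_distrib sum_subtractf flip: sum_distrib_right)
  finally have "\<eta> * (Lq - ?l k - \<eta> * ER) \<le> D"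
    by (simp add: algebra_simps power2_eq_square)
  then have "Lq - ?l k - \<eta> * ER \<le> D / \<eta>"
    using eta_pos by (simp add: pos_le_divide_eq mult.commute)
  moreover have "\<eta> * ER \<le> \<eta> * 3"
    unfolding ER_def R_def expected_second_order_eq[OF i(1)]
    using expected_second_order_le_3[OF assms(1) i] eta_pos by (intro mult_left_mono) auto
  moreover have "(\<Sum>a\<in>V. p h a * ?l a) \<le> Lq + 2 * \<eta>"
    unfolding Lq_def using expected_loss_p_le_q[OF assms(1)] gamma_eq by simp
  moreover have "(\<Sum>a\<in>V. p h a * (?l a - ln (q (a # h) k) / \<eta>))
      = (\<Sum>a\<in>V. p h a * ?l a) - D / \<eta> - ln (q h k) / \<eta>"
    unfolding D_def by (simp add: right_diff_distrib sum_subtractf sum_divide_distrib diff_divide_distrib)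
  ultimately show ?thesis by linarith
qed

lemma expected_loss_le:
  assumes "length h + n \<le> T" "k \<in> V"
  shows "expected_loss n h \<le> (\<Sum>s<n. l (length h + 1 + s) k) + 5 * \<eta> * n - ln (q h k) / \<eta>"
  using assms(1)
proof (induction n arbitrary: h)
  case 0
  have "ln (q h k) \<le> 0"
    using q_pos[OF assms(2)] q_le_1[OF assms(2)] by simp
  then show ?case
    using eta_pos by (simp add: divide_nonpos_pos)
next
  case (Suc n)
  let ?l = "l (length h + 1)"
  define S where "S = (\<Sum>s<n. l (length h + 2 + s) k) + 5 * \<eta> * n"
  have IH: "expected_loss n (a # h) \<le> S - ln (q (a # h) k) / \<eta>" for a
    using Suc.IH[of "a # h"] Suc.prems by (simp add: S_def add.assoc)
  have "expected_loss (Suc n) h = (\<Sum>a\<in>V. p h a * (?l a + expected_loss n (a # h)))"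
    by simp
  also have "\<dots> \<le> (\<Sum>a\<in>V. p h a * (?l a - ln (q (a # h) k) / \<eta> + S))"
    using IH p_pos by (intro sum_mono mult_left_mono) (auto simp: less_imp_le)
  also have "\<dots> = (\<Sum>a\<in>V. p h a * (?l a - ln (q (a # h) k) / \<eta>)) + S"
    using p_sum by (simp add: distrib_left sum.distrib flip: sum_distrib_right)
  also have "\<dots> \<le> ?l k + 5 * \<eta> - ln (q h k) / \<eta> + S"
    using round_potential_le[OF _ assms(2)] Suc.prems by simp
  also have "\<dots> = (\<Sum>s<Suc n. l (length h + 1 + s) k) + 5 * \<eta> * Suc n - ln (q h k) / \<eta>"
    unfolding S_def sum.lessThan_Suc_shift by (simp add: ring_distribs)
  finally show ?case .
qed

end

theorem theorem3:
  fixes K T :: nat and l :: "nat \<Rightarrow> nat \<Rightarrow> real" and \<eta> \<gamma> :: real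
  assumes "K \<ge> 2" and "T \<ge> 1"
    and "\<forall>t\<in>{1..T}. \<forall>i\<in>{1..K}. 0 \<le> l t i \<and> l t i \<le> 1"
    and "\<eta> = sqrt (ln (real K) / (2 * real T))"
    and "\<gamma> = 2 * \<eta>"
    and "\<gamma> \<le> 1"
  shows "exp3g_regret (loopless_clique {1..K}) {1..K} {1..K} \<eta> \<gamma> l T
           \<le> 5 * sqrt (real T * ln (real K))"
proof -
  have "0 < ln (real K)" using assms(1) by simp
  then have "0 < \<eta>" using assms(2,4) by simp
  interpret exp3g_on_loopless_clique "{1..K}" T l \<eta> \<gamma>
    using assms \<open>0 < \<eta>\<close> by unfold_locales simp_all
  obtain k where k: "k \<in> {1..K}" "(MIN i\<in>{1..K}. \<Sum>t=1..T. l t i) = (\<Sum>t=1..T. l t k)"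
    using Min_in[of "(\<lambda>i. \<Sum>t=1..T. l t i) ` {1..K}"] assms(1) by fastforce
  have "expected_loss T [] \<le> (\<Sum>t=1..T. l t k) + 5 * T * \<eta> + ln (real K) / \<eta>"
    using expected_loss_le[of "[]" T k] k(1)
    by (simp add: ln_div sum.atLeast1_atMost_eq mult.commute mult.left_commute)
  then have "exp3g_regret E {1..K} {1..K} \<eta> \<gamma> l T \<le> 5 * T * \<eta> + ln (real K) / \<eta>"
    unfolding exp3g_regret_def k(2) by simp
  also have "\<dots> \<le> 5 * sqrt (real T * ln (real K))"
    using tuned_rate_le[of "ln (real K)" T] \<open>0 < ln (real K)\<close> assms(2,4) by simp
  finally show ?thesis .
qed

end
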